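(* Let $G$ be a graph, with vertices labelled $1,\dots,n$, and let $F$ be an easy graph fibration with $F(G)\neq\emptyset$. Let $\mathscr{C}=\{(K,\mathbf{a},\mathbf{b})\mid (K,g_{\mathbf{a}}^{-1}g_{\mathbf{b}})\in F\}$ be the associated group-theoretical graph category, and let $\mathbb{G}$ be the orthogonal compact matrix quantum group whose intertwiner spaces are $\mathrm{span}\{T^G_{\mathbf{K}}\mid \mathbf{K}\in\mathscr{C}(k,l)\}$, $k,l\in\mathbb{N}_0$. Then $$\mathbb{G}=\hat\Gamma\rtimes\mathrm{Aut}\,G,\qquad \Gamma=\mathbb{Z}_2^{*V(G)}/F(G).$$
   Context: Graphs are finite, undirected, without multiple edges, loops allowed, up to isomorphism; graph homomorphisms map edges (including loops) to edges. $\mathbb{Z}_2^{*V}$ is the group generated by the set $V$ subject to $v^2=e$; for a tuple $\mathbf{a}$ of elements of $V$, $g_{\mathbf{a}}$ is the product of its entries; maps of sets induce maps on tuples and homomorphisms of these groups. For a partition $\pi$ of $V(K)$, $K/\pi$ has the blocks as vertices with an edge between two (possibly equal) blocks iff $K$ has an edge between some of their elements; $q_\pi$ the quotient map. A vertex overlap of graphs $K,H$ is a subset $f\subset V(K)\times V(H)$ with each vertex occurring at most once; $K\cup_fH$ is the quotient of $K\sqcup H$ identifying $v,w$ for $(v,w)\in f$; $f_K,f_H$ the induced maps. A graph fibration is a set $F$ of pairs $(K,a)$, $a\in\mathbb{Z}_2^{*V(K)}$, up to $(K,a)\equiv(K',\phi(a))$ for isomorphisms $\phi$, with $(N_0,e),(N_1,e)\in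 F$ ($N_k$ the edgeless graph on $k$ vertices), such that: (F1) $F(K):=\{a\mid(K,a)\in F\}$ is empty or a normal subgroup of $\mathbb{Z}_2^{*V(K)}$; (F2) $F(K)$ is invariant under automorphisms of $K$; (F3) $(K,a),(H,b)\in F$ implies $(K\cup_fH,f_K(a)f_H(b))\in F$ for every vertex overlap $f$. It is easy if (F4): $F(K)\ne\emptyset$ implies $q_\pi(F(K))\subset F(K/\pi)$ for every partition $\pi$ of $V(K)$. Bilabelled graph: $\mathbf{K}=(K,\mathbf{a},\mathbf{b})$, $\mathbf{a}\in V(K)^k$, $\mathbf{b}\in V(K)^l$, up to isomorphism; $\mathscr{C}(k,l)$ are those with $k$ inputs and $l$ outputs. For such $\mathbf{K}$, $T^G_{\mathbf{K}}\colon(\mathbb{C}^n)^{\otimes k}\to(\mathbb{C}^n)^{\otimes l}$ has entries $[T^G_{\mathbf{K}}]_{\mathbf{j}\mathbf{i}}=\#\{\phi\colon K\to G \text{ homomorphism}\mid \phi(\mathbf{a})=\mathbf{i},\phi(\mathbf{b})=\mathbf{j}\}$ (the coefficient of $e_{j_1}\otimes\cdots\otimes e_{j_l}$ in the image of $e_{i_1}\otimes\cdots\otimes e_{i_k}$). Quantum groups: an orthogonal compact matrix quantum group is a pair $(A,u)$, $A$ a $*$-algebra generated by the entries of $u\in M_n(A)$, with $u_{ij}=u_{ij}^*$, $uu^t=u^tu=1$, and $u_{ij}\mapsto\sum_k u_{ik}\otimes u_{kj}$ extending to a $*$-homomorphism $A\to A\otimes A$; its intertwiner spaces are $\mathrm{Mor}(u^{\otimes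 k},u^{\otimes l})=\{T\mid Tu^{\otimes k}=u^{\otimes l}T\}$. By Woronowicz–Tannaka–Krein duality such a quantum group is uniquely determined by its intertwiner spaces. A permutation group $H\subset S_n$ is the quantum group $(O(H),v)$ with $v_{ij}(\sigma)=\delta_{i\sigma(j)}$; here $\mathrm{Aut}\,G\subset S_n$ via the labelling. If $\Gamma$ is a quotient of $\mathbb{Z}_2^{*n}$ by an $H$-invariant normal subgroup, with $\gamma_i\in\mathbb{C}\Gamma$ the images of the generators, then $\hat\Gamma\rtimes H$ is the quantum group $(\mathbb{C}\Gamma\otimes O(H),u)$ with $u_{ij}=\gamma_i\otimes v_{ij}$. *)

theory Defs
  imports Complex_Main "HOL-Library.FuncSet" "HOL-Combinatorics.Permutations"
begin

text \<open>Vertices are natural numbers; since everything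
  is considered up to isomorphism, this captures all finite graphs.\<close>

type_synonym graph = "nat set \<times> (nat \<times> nat) set"

abbreviation V :: "graph \<Rightarrow> nat set" where "V K \<equiv> fst K"
abbreviation E :: "graph \<Rightarrow> (nat \<times> nat) set" where "E K \<equiv> snd K"

definition wf_graph :: "graph \<Rightarrow> bool" where
  "wf_graph K \<longleftrightarrow> finite (V K) \<and> E K \<subseteq> V K \<times> V K
     \<and> (\<forall>x y. (x, y) \<in> E K \<longrightarrow> (y, x) \<in> E K)"

definition graph_iso :: "(nat \<Rightarrow> nat) \<Rightarrow> graph \<Rightarrow> graph \<Rightarrow> bool" where
  "graph_iso \<phi> K K' \<longleftrightarrow> bij_betw \<phi> (V K) (V K')
     \<and> (\<forall>x\<in>V K. \<forall>y\<in>V K. (x, y) \<in> E K \<longleftrightarrow> (\<phi> x, \<phi> y) \<in> E K')"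

definition N0 :: graph where "N0 = ({}, {})"
definition N1 :: graph where "N1 = ({0}, {})"

definition map_edges :: "(nat \<Rightarrow> nat) \<Rightarrow> (nat \<times> nat) set \<Rightarrow> (nat \<times> nat) set" where
  "map_edges q R = {(q x, q y) | x y. (x, y) \<in> R}"

text \<open>Image graph of K under a map q; for q restricted to V(K) this is
  (isomorphic to) the quotient K/\<pi> where \<pi> is the partition of V(K) into the
  fibres of q. Every partition arises this way.\<close>
definition quot_graph :: "(nat \<Rightarrow> nat) \<Rightarrow> graph \<Rightarrow> graph" where
  "quot_graph q K = (q ` V K, map_edges q (E K))"

text \<open>An element of Z_2^{*V} is represented by its unique reduced word
  (no two equal adjacent letters). red reduces an arbitrary word.\<close>

fun push :: "'a \<Rightarrow> 'a list \<Rightarrow> 'a list" where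
  "push x [] = [x]"
| "push x (y # ys) = (if x = y then ys else x # y # ys)"

definition red :: "'a list \<Rightarrow> 'a list" where
  "red xs = foldr push xs []"

definition fwords :: "'a set \<Rightarrow> 'a list set" where
  "fwords A = {w. set w \<subseteq> A \<and> red w = w}"

text \<open>Group operations: product = red (a @ b), inverse = rev a, unit = [].
  The homomorphism induced by a map of sets q is  a \<mapsto> red (map q a).\<close>

definition normal_sub :: "'a set \<Rightarrow> 'a list set \<Rightarrow> bool" where
  "normal_sub A N \<longleftrightarrow> N \<subseteq> fwords A \<and> [] \<in> N
     \<and> (\<forall>a\<in>N. \<forall>b\<in>N. red (a @ b) \<in> N)
     \<and> (\<forall>a\<in>N. rev a \<in> N)
     \<and> (\<forall>a\<in>N. \<forall>g\<in>fwords A. red (rev g @ a @ g) \<in> N)"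

type_synonym fibration = "(graph \<times> nat list) set"

definition Fib :: "fibration \<Rightarrow> graph \<Rightarrow> nat list set" where
  "Fib F K = {a. (K, a) \<in> F}"

definition vertex_overlap :: "(nat \<times> nat) set \<Rightarrow> graph \<Rightarrow> graph \<Rightarrow> bool" where
  "vertex_overlap f K H \<longleftrightarrow> f \<subseteq> V K \<times> V H
     \<and> (\<forall>v w v' w'. (v, w) \<in> f \<and> (v', w') \<in> f \<longrightarrow> (v = v' \<longleftrightarrow> w = w'))"

text \<open>Concrete representative of K \<union>_f H: vertex v of K becomes 2v, vertex w of H
  becomes 2v if (v,w) \<in> f and 2w+1 otherwise.\<close>
definition ovK :: "nat \<Rightarrow> nat" where "ovK v = 2 * v"
definition ovH :: "(nat \<times> nat) set \<Rightarrow> nat \<Rightarrow> nat" where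
  "ovH f w = (if \<exists>v. (v, w) \<in> f then 2 * (THE v. (v, w) \<in> f) else 2 * w + 1)"

definition glue :: "(nat \<times> nat) set \<Rightarrow> graph \<Rightarrow> graph \<Rightarrow> graph" where
  "glue f K H = (ovK ` V K \<union> ovH f ` V H, map_edges ovK (E K) \<union> map_edges (ovH f) (E H))"

definition graph_fibration :: "fibration \<Rightarrow> bool" where
  "graph_fibration F \<longleftrightarrow>
     \<comment> \<open>elements are pairs (K,a) with a \<in> Z_2^{*V(K)}\<close>
     (\<forall>K a. (K, a) \<in> F \<longrightarrow> wf_graph K \<and> a \<in> fwords (V K))
     \<comment> \<open>F is a set of isomorphism classes\<close>
   \<and> (\<forall>K K' \<phi> a. (K, a) \<in> F \<and> wf_graph K' \<and> graph_iso \<phi> K K'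
        \<longrightarrow> (K', red (map \<phi> a)) \<in> F)
   \<and> (N0, []) \<in> F \<and> (N1, []) \<in> F
     \<comment> \<open>(F1)\<close>
   \<and> (\<forall>K. wf_graph K \<longrightarrow> Fib F K = {} \<or> normal_sub (V K) (Fib F K))
     \<comment> \<open>(F2)\<close>
   \<and> (\<forall>K \<phi>. wf_graph K \<and> graph_iso \<phi> K K
        \<longrightarrow> (\<lambda>a. red (map \<phi> a)) ` Fib F K \<subseteq> Fib F K)
     \<comment> \<open>(F3)\<close>
   \<and> (\<forall>K H a b f. (K, a) \<in> F \<and> (H, b) \<in> F \<and> vertex_overlap f K H
        \<longrightarrow> (glue f K H, red (map ovK a @ map (ovH f) b)) \<in> F)"

definition easy_fibration :: "fibration \<Rightarrow> bool" where
  "easy_fibration F \<longleftrightarrow>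
     (\<forall>K q. wf_graph K \<and> Fib F K \<noteq> {}
        \<longrightarrow> (\<lambda>a. red (map q a)) ` Fib F K \<subseteq> Fib F (quot_graph q K))"

text \<open>The category C(k,l): bilabelled graphs (K,a,b) with (K, g_a^{-1} g_b) \<in> F.
  Since each generator is an involution, g_a^{-1} g_b = red (rev a @ b).\<close>
definition Ccat :: "fibration \<Rightarrow> nat \<Rightarrow> nat \<Rightarrow> (graph \<times> nat list \<times> nat list) set" where
  "Ccat F k l = {(K, a, b). wf_graph K \<and> length a = k \<and> length b = l
      \<and> set a \<subseteq> V K \<and> set b \<subseteq> V K \<and> (K, red (rev a @ b)) \<in> F}"

definition homs :: "graph \<Rightarrow> graph \<Rightarrow> (nat \<Rightarrow> nat) set" where
  "homs K G = {\<phi> \<in> extensional (V K). (\<forall>x\<in>V K. \<phi> x \<in> V G)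
      \<and> (\<forall>x y. (x, y) \<in> E K \<longrightarrow> (\<phi> x, \<phi> y) \<in> E G)}"

text \<open>Linear maps (C^n)^{\<otimes>k} \<rightarrow> (C^n)^{\<otimes>l} are represented by their matrices
  T j i (row multi-index j of length l, column multi-index i of length k,
  entries in {1..n}); entries outside that range are required to be 0.\<close>
type_synonym mat = "nat list \<Rightarrow> nat list \<Rightarrow> complex"

definition Tmat :: "graph \<Rightarrow> graph \<Rightarrow> nat list \<Rightarrow> nat list \<Rightarrow> mat" where
  "Tmat G K a b = (\<lambda>j i. of_nat (card {\<phi> \<in> homs K G. map \<phi> a = i \<and> map \<phi> b = j}))"

definition idx :: "nat \<Rightarrow> nat \<Rightarrow> nat list set" where
  "idx n k = {xs. length xs = k \<and> set xs \<subseteq> {1..n}}"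

definition cspan :: "mat set \<Rightarrow> mat set" where
  "cspan S = {T. \<exists>X c. finite X \<and> X \<subseteq> S \<and> T = (\<lambda>j i. \<Sum>M\<in>X. c M * M j i)}"

definition AutG :: "graph \<Rightarrow> nat \<Rightarrow> (nat \<Rightarrow> nat) set" where
  "AutG G n = {\<sigma>. \<sigma> permutes {1..n} \<and> (\<forall>x y. (x, y) \<in> E G \<longleftrightarrow> (\<sigma> x, \<sigma> y) \<in> E G)}"

text \<open>\<Gamma> = Z_2^{*V}/N: the element of \<Gamma> represented by the word w is its coset.\<close>
definition gclass :: "nat list set \<Rightarrow> nat list \<Rightarrow> nat list set" where
  "gclass N w = (\<lambda>x. red (w @ x)) ` N"

text \<open>Elements of the algebra C\<Gamma> \<otimes> O(H) \<cong> (C\<Gamma>)^H are represented as functions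
  \<sigma> \<mapsto> (element of C\<Gamma> as coefficient function \<Gamma> \<rightarrow> C).
  The entry (u^{\<otimes>k})_{m,i} = u_{m_1 i_1}\<cdots>u_{m_k i_k} = \<gamma>_{m_1}\<cdots>\<gamma>_{m_k} \<otimes> v_{m_1 i_1}\<cdots>v_{m_k i_k},
  with v_{ij}(\<sigma>) = \<delta>_{i,\<sigma>(j)}.\<close>
definition ucoef :: "nat list set \<Rightarrow> (nat \<Rightarrow> nat) set \<Rightarrow> nat list \<Rightarrow> nat list
    \<Rightarrow> (nat \<Rightarrow> nat) \<Rightarrow> nat list set \<Rightarrow> complex" where
  "ucoef N H m i = (\<lambda>\<sigma> c. if \<sigma> \<in> H \<and> m = map \<sigma> i \<and> c = gclass N m then 1 else 0)"

text \<open>Mor(u^{\<otimes>k}, u^{\<otimes>l}) = {T | T u^{\<otimes>k} = u^{\<otimes>l} T} for the quantum group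
  \<Gamma>^ \<rtimes> H, \<Gamma> = Z_2^{*n}/N, acting on C^n.\<close>
definition intertw :: "nat list set \<Rightarrow> (nat \<Rightarrow> nat) set \<Rightarrow> nat \<Rightarrow> nat \<Rightarrow> nat \<Rightarrow> mat set" where
  "intertw N H n k l = {T.
     (\<forall>j i. T j i \<noteq> 0 \<longrightarrow> j \<in> idx n l \<and> i \<in> idx n k)
   \<and> (\<forall>j\<in>idx n l. \<forall>i\<in>idx n k.
        (\<lambda>\<sigma> c. \<Sum>m\<in>idx n k. T j m * ucoef N H m i \<sigma> c)
      = (\<lambda>\<sigma> c. \<Sum>p\<in>idx n l. ucoef N H j p \<sigma> c * T p i))}"

end

(*
  A matrix T intertwines the tensor powers of the fundamental representation of
  the semidirect product exactly when it is invariant under Aut G and every nonzero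
  entry T(j, i) has its labels in the same coset, i.e. g_i^-1 g_j lies in F(G).

  The matrices T^G_K of the category have both properties: automorphisms of G
  permute the homomorphisms K -> G, and the image of K under a homomorphism is a
  quotient of K, so its label word lies in F by easiness, and gluing that image
  into G moves the word to F(G).

  Conversely, an invariant T is the average over Aut G of its entries times the
  matrices counting injective homomorphisms G -> G with prescribed labels, which
  are G itself bilabelled by (i, j), an element of the category. Counts of injective
  homomorphisms lie in the span of the T^G_K by Moebius inversion over the
  quotients of K, which stay in the category because F is easy.
*)
theory Submission
  imports Defs
begin

section \<open>Reduced words\<close>

lemma red_Nil [simp]: "red [] = []"
  by (simp add: red_def)

lemma red_Cons: "red (x # xs) = push x (red xs)"
  by (simp add: red_def)

lemma successively_push: "successively (\<noteq>) w \<Longrightarrow> successively (\<noteq>) (push x w)"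
  by (cases w) (auto simp: successively_Cons)

lemma successively_red: "successively (\<noteq>) (red w)"
  by (induction w) (simp_all add: red_Cons successively_push)

lemma red_successively: "successively (\<noteq>) w \<Longrightarrow> red w = w"
  by (induction "(\<noteq>) :: 'a \<Rightarrow> 'a \<Rightarrow> bool" w rule: successively.induct)
    (simp_all add: red_Cons)

lemma red_red [simp]: "red (red w) = red w"
  by (rule red_successively[OF successively_red])

lemma push_push: "successively (\<noteq>) w \<Longrightarrow> push x (push x w) = w"
  by (cases w rule: remdups_adj.cases) auto

lemma red_append: "red (xs @ ys) = foldr push xs (red ys)"
  by (simp add: red_def)

lemma foldr_push_red: "foldr push (red xs) (red w) = foldr push xs (red w)"
proof (induction xs)
  case (Cons x xs)
  have "foldr push (push x (red xs)) (red w) = push x (foldr push (red xs) (red w))"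
  proof (cases "red xs")
    case (Cons y ys)
    have "successively (\<noteq>) (foldr push ys (red w))"
      by (metis red_append successively_red)
    then show ?thesis using Cons by (simp add: push_push)
  qed simp
  then show ?case using Cons.IH by (simp add: red_Cons)
qed simp

lemma red_append_red_right [simp]: "red (xs @ red ys) = red (xs @ ys)"
  by (simp add: red_append)

lemma red_append_red_left [simp]: "red (red xs @ ys) = red (xs @ ys)"
  by (simp add: red_append foldr_push_red)

lemma red_cancel: "red (ys @ x # x # zs) = red (ys @ zs)"
  by (metis red_append_red_right red_Cons push_push successively_red)

lemma red_rev_append_cancel: "red (rev xs @ xs @ ys) = red ys"
proof (induction xs arbitrary: ys)
  case (Cons x xs)
  then show ?case using red_cancel[of "rev xs" x "xs @ ys"] by simp
qed simp

lemma red_append_rev_cancel: "red (xs @ rev xs @ ys) = red ys"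
  using red_rev_append_cancel[of "rev xs"] by simp

lemma red_rev: "red (rev xs) = rev (red xs)"
proof -
  have "red (rev xs) = red (rev xs @ red (red xs @ rev (red xs)))"
    using red_append_rev_cancel[of "red xs" "[]"] by simp
  also have "\<dots> = red (red (rev xs @ red xs) @ rev (red xs))"
    by (simp only: red_append_red_right red_append_red_left append_assoc)
  also have "\<dots> = rev (red xs)"
    using red_rev_append_cancel[of xs "[]"]
    by (simp add: red_successively successively_red eq_commute)
  finally show ?thesis .
qed

lemma red_map_push: "red (map q (push x w)) = red (q x # map q w)"
  by (cases w) (auto simp: red_Cons push_push successively_red)

lemma red_map_red [simp]: "red (map q (red xs)) = red (map q xs)"
  by (induction xs) (simp_all add: red_Cons red_map_push)

lemma wf_graph_edge: "wf_graph K \<Longrightarrow> (x, y) \<in> E K \<Longrightarrow> x \<in> V K \<and> y \<in> V K"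
  unfolding wf_graph_def by blast

lemma wf_graph_quot_graph: "wf_graph K \<Longrightarrow> wf_graph (quot_graph q K)"
  unfolding wf_graph_def quot_graph_def map_edges_def by (auto; blast)

lemma graph_iso_quot_graph:
  assumes "\<And>v. g (h v) = v"
  shows "graph_iso g (quot_graph h K) K"
proof -
  have "inj h" by (metis assms injI)
  then have "(h x, h y) \<in> map_edges h (E K) \<longleftrightarrow> (x, y) \<in> E K" for x y
    by (auto simp: map_edges_def inj_eq)
  moreover have "bij_betw g (h ` V K) (V K)"
    by (rule bij_betw_byWitness[where f' = h]) (auto simp: assms image_iff)
  ultimately show ?thesis
    by (auto simp: graph_iso_def quot_graph_def assms)
qed

lemma fibration_wf:
  assumes "graph_fibration F" "(K, a) \<in> F"
  shows "wf_graph K" "a \<in> fwords (V K)"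
  using assms unfolding graph_fibration_def by meson+

lemma fibration_iso:
  assumes "graph_fibration F" "(K, a) \<in> F" "wf_graph K'" "graph_iso \<phi> K K'"
  shows "(K', red (map \<phi> a)) \<in> F"
  using assms unfolding graph_fibration_def by meson

lemma fibration_normal:
  assumes "graph_fibration F" "wf_graph K" "Fib F K \<noteq> {}"
  shows "normal_sub (V K) (Fib F K)"
  using assms unfolding graph_fibration_def by meson

lemma fibration_glue:
  assumes "graph_fibration F" "(K, a) \<in> F" "(H, b) \<in> F" "vertex_overlap f K H"
  shows "(glue f K H, red (map ovK a @ map (ovH f) b)) \<in> F"
  using assms unfolding graph_fibration_def by meson

lemma easy_fibration_quot:
  assumes "easy_fibration F" "wf_graph K" "x \<in> Fib F K"
  shows "red (map q x) \<in> Fib F (quot_graph q K)"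
  using assms unfolding easy_fibration_def by blast

lemma map_edges_eq_image: "map_edges q R = map_prod q q ` R"
  by (auto simp: map_edges_def)

text \<open>Glue Q onto G along the identity of V(Q): the result is a copy of G.\<close>
lemma fibration_supergraph:
  assumes F: "graph_fibration F" and G: "wf_graph G" "(G, []) \<in> F" and Q: "(Q, x) \<in> F"
    and sub: "V Q \<subseteq> V G" "E Q \<subseteq> E G"
  shows "(G, x) \<in> F"
proof -
  define h where "h w = (if w \<in> V Q then 2 * w else 2 * w + 1)" for w
  have halve: "h w div 2 = w" for w
    by (simp add: h_def)
  have h_ovK: "w \<in> V Q \<Longrightarrow> ovK w = h w" for w
    by (simp add: h_def ovK_def)
  have EQ: "E Q \<subseteq> V Q \<times> V Q"
    using fibration_wf(1)[OF F Q] by (simp add: wf_graph_def)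
  have ovH: "ovH (Id_on (V Q)) = h"
    by (rule ext) (auto simp: ovH_def h_def)
  have "vertex_overlap (Id_on (V Q)) Q G"
    using sub by (auto simp: vertex_overlap_def)
  then have "(glue (Id_on (V Q)) Q G, red (map ovK x)) \<in> F"
    using fibration_glue[OF F Q G(2)] by simp
  moreover have "glue (Id_on (V Q)) Q G = quot_graph h G"
  proof -
    have "map_edges ovK (E Q) = map_edges h (E Q)"
      unfolding map_edges_eq_image using EQ h_ovK by (intro image_cong) auto
    also have "\<dots> \<subseteq> map_edges h (E G)"
      unfolding map_edges_eq_image using sub(2) by (rule image_mono)
    finally have "map_edges ovK (E Q) \<subseteq> map_edges h (E G)" .
    moreover have "ovK ` V Q \<subseteq> h ` V G"
      using h_ovK sub(1) by (metis image_cong image_mono)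
    ultimately show ?thesis
      by (auto simp: glue_def quot_graph_def ovH)
  qed
  moreover have "map ovK x = map h x"
    using fibration_wf(2)[OF F Q] h_ovK by (auto simp: fwords_def)
  ultimately have "(quot_graph h G, red (map h x)) \<in> F"
    by simp
  moreover have "graph_iso (\<lambda>m. m div 2) (quot_graph h G) G"
    by (rule graph_iso_quot_graph) (rule halve)
  ultimately have "(G, red (map (\<lambda>m. m div 2) (red (map h x)))) \<in> F"
    by (rule fibration_iso[OF F _ G(1)])
  moreover have "red x = x"
    using fibration_wf(2)[OF F Q] by (simp add: fwords_def)
  ultimately show ?thesis
    by (simp add: comp_def halve)
qed

lemma cspan_base: "M \<in> S \<Longrightarrow> M \<in> cspan S"
  unfolding cspan_def by (rule CollectI exI[of _ "{M}"] exI[of _ "\<lambda>_. 1"])+ simp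

lemma cspan_zero: "(\<lambda>j i. 0) \<in> cspan S"
  unfolding cspan_def by (rule CollectI exI[of _ "{}"])+ simp

lemma sum_Un_restrict:
  assumes "finite A" "finite B"
  shows "(\<Sum>x\<in>A \<union> B. if x \<in> A then f x else 0) = sum f A"
  using assms by (simp add: sum.inter_restrict[symmetric] Int_absorb2)

lemma cspan_add:
  assumes "A \<in> cspan S" "B \<in> cspan S"
  shows "(\<lambda>j i. A j i + B j i) \<in> cspan S"
proof -
  obtain XA cA where XA: "finite XA" "XA \<subseteq> S" "A = (\<lambda>j i. \<Sum>M\<in>XA. cA M * M j i)"
    using assms(1) unfolding cspan_def by blast
  obtain XB cB where XB: "finite XB" "XB \<subseteq> S" "B = (\<lambda>j i. \<Sum>M\<in>XB. cB M * M j i)"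
    using assms(2) unfolding cspan_def by blast
  define c where "c M = (if M \<in> XA then cA M else 0) + (if M \<in> XB then cB M else 0)" for M
  have "c M * M j i = (if M \<in> XA then cA M * M j i else 0) + (if M \<in> XB then cB M * M j i else 0)"
    for M j i by (simp add: c_def distrib_right)
  then have "A j i + B j i = (\<Sum>M\<in>XA \<union> XB. c M * M j i)" for j i
    using sum_Un_restrict[OF XA(1) XB(1), of "\<lambda>M. cA M * M j i"]
      sum_Un_restrict[OF XB(1) XA(1), of "\<lambda>M. cB M * M j i"]
    by (simp add: XA(3) XB(3) sum.distrib Un_commute)
  then show ?thesis
    unfolding cspan_def using XA XB by blast
qed

lemma cspan_scale:
  assumes "A \<in> cspan S"
  shows "(\<lambda>j i. c * A j i) \<in> cspan S"
proof -
  obtain X cA where "finite X" "X \<subseteq> S" "A = (\<lambda>j i. \<Sum>M\<in>X. cA M * M j i)"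
    using assms unfolding cspan_def by blast
  then show ?thesis
    unfolding cspan_def
    by (intro CollectI exI[of _ X] exI[of _ "\<lambda>M. c * cA M"]) (simp add: sum_distrib_left mult.assoc)
qed

lemma cspan_diff: "A \<in> cspan S \<Longrightarrow> B \<in> cspan S \<Longrightarrow> (\<lambda>j i. A j i - B j i) \<in> cspan S"
  using cspan_add[OF _ cspan_scale, of A S B "-1"] by simp

lemma cspan_sum:
  assumes "finite I" "\<And>x. x \<in> I \<Longrightarrow> f x \<in> cspan S"
  shows "(\<lambda>j i. \<Sum>x\<in>I. f x j i) \<in> cspan S"
  using assms by (induction I rule: finite_induct) (simp_all add: cspan_zero cspan_add)

section \<open>Counting homomorphisms by their kernels\<close>

definition labelled_homs :: "graph \<Rightarrow> graph \<Rightarrow> nat list \<Rightarrow> nat list \<Rightarrow> nat list \<Rightarrow> nat list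
    \<Rightarrow> (nat \<Rightarrow> nat) set" where
  "labelled_homs K G a b i j = {\<phi> \<in> homs K G. map \<phi> a = i \<and> map \<phi> b = j}"

definition inj_labelled_homs :: "graph \<Rightarrow> graph \<Rightarrow> nat list \<Rightarrow> nat list \<Rightarrow> nat list
    \<Rightarrow> nat list \<Rightarrow> (nat \<Rightarrow> nat) set" where
  "inj_labelled_homs K G a b i j = {\<phi> \<in> labelled_homs K G a b i j. inj_on \<phi> (V K)}"

definition Tinj :: "graph \<Rightarrow> graph \<Rightarrow> nat list \<Rightarrow> nat list \<Rightarrow> mat" where
  "Tinj G K a b = (\<lambda>j i. of_nat (card (inj_labelled_homs K G a b i j)))"

lemma Tmat_eq_card: "Tmat G K a b j i = of_nat (card (labelled_homs K G a b i j))"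
  by (simp add: Tmat_def labelled_homs_def)

lemma map_restrict: "set a \<subseteq> A \<Longrightarrow> map (restrict f A) a = map f a"
  by (rule map_cong) auto

lemma finite_homs: "finite (V K) \<Longrightarrow> finite (V G) \<Longrightarrow> finite (homs K G)"
  by (rule finite_subset[OF _ finite_PiE[of "V K" "\<lambda>_. V G"]]) (auto simp: homs_def PiE_def)

lemma hom_comp_quot:
  assumes K: "wf_graph K" and \<psi>: "\<psi> \<in> homs (quot_graph r K) G"
  shows "restrict (\<psi> \<circ> r) (V K) \<in> homs K G"
  using \<psi> wf_graph_edge[OF K]
  by (fastforce simp: homs_def quot_graph_def map_edges_def)

lemma hom_restrict_quot:
  assumes K: "wf_graph K" and \<phi>: "\<phi> \<in> homs K G" and r: "\<And>v. v \<in> V K \<Longrightarrow> \<phi> (r v) = \<phi> v"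
  shows "restrict \<phi> (r ` V K) \<in> homs (quot_graph r K) G"
  using \<phi> r wf_graph_edge[OF K]
  by (fastforce simp: homs_def quot_graph_def map_edges_def)

text \<open>A partition of V(K) is encoded by the retraction sending each block to its least
  element; the quotient K/\<pi> is then quot_graph r K.\<close>
definition block_retractions :: "graph \<Rightarrow> (nat \<Rightarrow> nat) set" where
  "block_retractions K =
     {r \<in> extensional (V K). \<forall>v\<in>V K. r v \<in> V K \<and> r v \<le> v \<and> r (r v) = r v}"

definition kernel_retraction :: "graph \<Rightarrow> (nat \<Rightarrow> nat) \<Rightarrow> nat \<Rightarrow> nat" where
  "kernel_retraction K \<phi> = restrict (\<lambda>v. Min {w \<in> V K. \<phi> w = \<phi> v}) (V K)"

lemma finite_block_retractions: "finite (V K) \<Longrightarrow> finite (block_retractions K)"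
  by (rule finite_subset[OF _ finite_PiE[of "V K" "\<lambda>_. V K"]])
    (auto simp: block_retractions_def PiE_def)

lemma kernel_retraction:
  assumes "finite (V K)" "v \<in> V K"
  shows "kernel_retraction K \<phi> v \<in> V K" "\<phi> (kernel_retraction K \<phi> v) = \<phi> v"
    "kernel_retraction K \<phi> v \<le> v"
proof -
  have "finite {w \<in> V K. \<phi> w = \<phi> v}" "v \<in> {w \<in> V K. \<phi> w = \<phi> v}"
    using assms by simp_all
  then show "kernel_retraction K \<phi> v \<in> V K" "\<phi> (kernel_retraction K \<phi> v) = \<phi> v"
    "kernel_retraction K \<phi> v \<le> v"
    using Min_in[of "{w \<in> V K. \<phi> w = \<phi> v}"] Min_le assms(2)
    by (auto simp: kernel_retraction_def)
qed

lemma kernel_retraction_eq_iff: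
  assumes "finite (V K)" "v \<in> V K" "w \<in> V K"
  shows "kernel_retraction K \<phi> v = kernel_retraction K \<phi> w \<longleftrightarrow> \<phi> v = \<phi> w"
proof
  assume "kernel_retraction K \<phi> v = kernel_retraction K \<phi> w"
  then show "\<phi> v = \<phi> w"
    using kernel_retraction(2)[OF assms(1,2)] kernel_retraction(2)[OF assms(1,3)] by metis
next
  assume "\<phi> v = \<phi> w"
  then show "kernel_retraction K \<phi> v = kernel_retraction K \<phi> w"
    using assms(2,3) by (simp add: kernel_retraction_def)
qed

lemma kernel_retraction_in_block_retractions:
  assumes "finite (V K)"
  shows "kernel_retraction K \<phi> \<in> block_retractions K"
proof -
  have "kernel_retraction K \<phi> (kernel_retraction K \<phi> v) = kernel_retraction K \<phi> v"
    if "v \<in> V K" for v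
    using kernel_retraction_eq_iff[OF assms kernel_retraction(1)[OF assms that] that]
      kernel_retraction(2)[OF assms that] by simp
  moreover have "kernel_retraction K \<phi> \<in> extensional (V K)"
    by (simp add: kernel_retraction_def)
  ultimately show ?thesis
    using kernel_retraction[OF assms] by (simp add: block_retractions_def)
qed

lemma kernel_retraction_unique:
  assumes fin: "finite (V K)" and r: "r \<in> block_retractions K"
    and ker: "\<And>v w. v \<in> V K \<Longrightarrow> w \<in> V K \<Longrightarrow> \<phi> v = \<phi> w \<longleftrightarrow> r v = r w"
  shows "kernel_retraction K \<phi> = r"
proof
  fix v
  show "kernel_retraction K \<phi> v = r v"
  proof (cases "v \<in> V K")
    case True
    then have "{w \<in> V K. \<phi> w = \<phi> v} = {w \<in> V K. r w = r v}"
      using ker by blast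
    moreover have "Min {w \<in> V K. r w = r v} = r v"
      using r True fin by (intro Min_eqI) (auto simp: block_retractions_def)
    ultimately show ?thesis
      using True by (simp add: kernel_retraction_def)
  next
    case False
    then show ?thesis
      using r by (simp add: kernel_retraction_def block_retractions_def extensional_def)
  qed
qed

lemma restrict_hom_to_kernel_quot:
  assumes K: "wf_graph K" and \<phi>: "\<phi> \<in> labelled_homs K G a b i j"
    and r: "kernel_retraction K \<phi> = r" and a: "set a \<subseteq> V K" and b: "set b \<subseteq> V K"
  shows "restrict \<phi> (r ` V K) \<in> inj_labelled_homs (quot_graph r K) G (map r a) (map r b) i j"
proof -
  have fin: "finite (V K)"
    using K by (simp add: wf_graph_def)
  have \<phi>r: "v \<in> V K \<Longrightarrow> \<phi> (r v) = \<phi> v" for v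
    using kernel_retraction(2)[OF fin] r by blast
  have "inj_on (restrict \<phi> (r ` V K)) (r ` V K)"
    using kernel_retraction_eq_iff[OF fin] r \<phi>r by (auto simp: inj_on_def)
  moreover have "restrict \<phi> (r ` V K) \<in> homs (quot_graph r K) G"
    using hom_restrict_quot[OF K, of \<phi>] \<phi> \<phi>r by (simp add: labelled_homs_def)
  moreover have "map (restrict \<phi> (r ` V K)) (map r c) = map \<phi> c" if "set c \<subseteq> V K" for c
    using that \<phi>r by (auto simp: map_eq_conv subset_iff)
  then have "map (restrict \<phi> (r ` V K)) (map r a) = i" "map (restrict \<phi> (r ` V K)) (map r b) = j"
    using \<phi> a b unfolding labelled_homs_def by (metis (mono_tags, lifting) mem_Collect_eq)+
  ultimately show ?thesis
    by (simp add: inj_labelled_homs_def labelled_homs_def quot_graph_def)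
qed

lemma comp_quot_hom:
  assumes K: "wf_graph K" and r: "r \<in> block_retractions K"
    and \<psi>: "\<psi> \<in> inj_labelled_homs (quot_graph r K) G (map r a) (map r b) i j"
    and a: "set a \<subseteq> V K" and b: "set b \<subseteq> V K"
  shows "restrict (\<psi> \<circ> r) (V K) \<in> labelled_homs K G a b i j"
    "kernel_retraction K (restrict (\<psi> \<circ> r) (V K)) = r"
proof -
  have fin: "finite (V K)"
    using K by (simp add: wf_graph_def)
  have "r ` V K \<subseteq> V K" "inj_on \<psi> (r ` V K)"
    using r \<psi> by (auto simp: block_retractions_def inj_labelled_homs_def quot_graph_def)
  then show "kernel_retraction K (restrict (\<psi> \<circ> r) (V K)) = r"
    by (intro kernel_retraction_unique[OF fin r]) (auto simp: inj_on_def)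
  show "restrict (\<psi> \<circ> r) (V K) \<in> labelled_homs K G a b i j"
    using hom_comp_quot[OF K] \<psi> a b
    by (auto simp: inj_labelled_homs_def labelled_homs_def map_restrict)
qed

lemma card_labelled_homs_with_kernel:
  assumes K: "wf_graph K" and r: "r \<in> block_retractions K"
    and a: "set a \<subseteq> V K" and b: "set b \<subseteq> V K"
  shows "card {\<phi> \<in> labelled_homs K G a b i j. kernel_retraction K \<phi> = r}
       = card (inj_labelled_homs (quot_graph r K) G (map r a) (map r b) i j)"
proof (rule bij_betw_same_card[OF bij_betw_byWitness[where f = "\<lambda>\<phi>. restrict \<phi> (r ` V K)"
      and f' = "\<lambda>\<psi>. restrict (\<psi> \<circ> r) (V K)"]])
  have fin: "finite (V K)"
    using K by (simp add: wf_graph_def)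
  have rV: "r ` V K \<subseteq> V K" "v \<in> V K \<Longrightarrow> r (r v) = r v" for v
    using r by (auto simp: block_retractions_def)
  show "\<forall>\<phi>\<in>{\<phi> \<in> labelled_homs K G a b i j. kernel_retraction K \<phi> = r}.
      restrict (restrict \<phi> (r ` V K) \<circ> r) (V K) = \<phi>"
  proof (intro ballI ext)
    fix \<phi> v assume "\<phi> \<in> {\<phi> \<in> labelled_homs K G a b i j. kernel_retraction K \<phi> = r}"
    then have "\<phi> \<in> extensional (V K)" "kernel_retraction K \<phi> = r"
      by (auto simp: labelled_homs_def homs_def)
    then show "restrict (restrict \<phi> (r ` V K) \<circ> r) (V K) v = \<phi> v"
      using kernel_retraction(2)[OF fin, of v \<phi>] by (auto simp: extensional_def)
  qed
  show "\<forall>\<psi>\<in>inj_labelled_homs (quot_graph r K) G (map r a) (map r b) i j.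
      restrict (restrict (\<psi> \<circ> r) (V K)) (r ` V K) = \<psi>"
  proof (intro ballI ext)
    fix \<psi> v assume "\<psi> \<in> inj_labelled_homs (quot_graph r K) G (map r a) (map r b) i j"
    then have "\<psi> \<in> extensional (r ` V K)"
      by (simp add: inj_labelled_homs_def labelled_homs_def homs_def quot_graph_def)
    then show "restrict (restrict (\<psi> \<circ> r) (V K)) (r ` V K) v = \<psi> v"
      using rV by (cases "v \<in> r ` V K") (auto simp: extensional_def)
  qed
  show "(\<lambda>\<phi>. restrict \<phi> (r ` V K)) ` {\<phi> \<in> labelled_homs K G a b i j. kernel_retraction K \<phi> = r}
      \<subseteq> inj_labelled_homs (quot_graph r K) G (map r a) (map r b) i j"
    using restrict_hom_to_kernel_quot[OF K _ _ a b] by blast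
  show "(\<lambda>\<psi>. restrict (\<psi> \<circ> r) (V K)) ` inj_labelled_homs (quot_graph r K) G (map r a) (map r b) i j
      \<subseteq> {\<phi> \<in> labelled_homs K G a b i j. kernel_retraction K \<phi> = r}"
    using comp_quot_hom[OF K r _ a b] by blast
qed

lemma Tmat_eq_sum_Tinj:
  assumes K: "wf_graph K" and G: "wf_graph G" and a: "set a \<subseteq> V K" and b: "set b \<subseteq> V K"
  shows "Tmat G K a b j i
       = (\<Sum>r\<in>block_retractions K. Tinj G (quot_graph r K) (map r a) (map r b) j i)"
proof -
  have fin: "finite (V K)" "finite (V G)"
    using K G by (simp_all add: wf_graph_def)
  have "finite (labelled_homs K G a b i j)"
    using finite_homs[OF fin] by (simp add: labelled_homs_def)
  then have "(\<Sum>r\<in>block_retractions K. \<Sum>\<phi>\<in>{\<phi> \<in> labelled_homs K G a b i j.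
      kernel_retraction K \<phi> = r}. 1::nat) = (\<Sum>\<phi>\<in>labelled_homs K G a b i j. 1)"
    using kernel_retraction_in_block_retractions[OF fin(1)]
    by (intro sum.group finite_block_retractions[OF fin(1)]) auto
  then have "card (labelled_homs K G a b i j) = (\<Sum>r\<in>block_retractions K.
      card (inj_labelled_homs (quot_graph r K) G (map r a) (map r b) i j))"
    using card_labelled_homs_with_kernel[OF K _ a b] by simp
  then show ?thesis
    by (simp add: Tmat_eq_card Tinj_def)
qed

lemma restrict_id_in_block_retractions: "restrict id (V K) \<in> block_retractions K"
  by (simp add: block_retractions_def)

lemma quot_graph_restrict_id:
  assumes "wf_graph K"
  shows "quot_graph (restrict id (V K)) K = K"
proof -
  have "map_edges (restrict id (V K)) (E K) = E K"
    using wf_graph_edge[OF assms] unfolding map_edges_def by force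
  then show ?thesis
    by (simp add: quot_graph_def)
qed

lemma card_quot_graph_less:
  assumes fin: "finite (V K)" and r: "r \<in> block_retractions K" "r \<noteq> restrict id (V K)"
  shows "card (V (quot_graph r K)) < card (V K)"
proof -
  have rV: "r ` V K \<subseteq> V K"
    using r by (auto simp: block_retractions_def)
  have "\<not> inj_on r (V K)"
  proof
    assume "inj_on r (V K)"
    then have "v \<in> V K \<Longrightarrow> r v = v" for v
      using r(1) by (auto simp: block_retractions_def dest: inj_onD)
    then have "r = restrict id (V K)"
      using r(1) by (intro ext) (auto simp: block_retractions_def extensional_def)
    then show False
      using r(2) by simp
  qed
  then have "card (r ` V K) \<noteq> card (V K)"
    using eq_card_imp_inj_on[OF fin] by blast
  then have "card (r ` V K) < card (V K)"
    using card_image_le[OF fin, of r] by linarith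
  then show ?thesis
    by (simp add: quot_graph_def)
qed

lemma Ccat_quot_graph:
  assumes "easy_fibration F" and C: "(K, a, b) \<in> Ccat F k l"
  shows "(quot_graph q K, map q a, map q b) \<in> Ccat F k l"
proof -
  have K: "wf_graph K" and "red (rev a @ b) \<in> Fib F K"
    using C by (auto simp: Ccat_def Fib_def)
  then have "red (rev (map q a) @ map q b) \<in> Fib F (quot_graph q K)"
    using easy_fibration_quot[OF assms(1)] by (fastforce simp: rev_map)
  then show ?thesis
    using C wf_graph_quot_graph[OF K] by (auto simp: Ccat_def Fib_def quot_graph_def)
qed

lemma Tinj_in_cspan_Tmat:
  assumes "easy_fibration F" and G: "wf_graph G"
  shows "(K, a, b) \<in> Ccat F k l \<Longrightarrow> Tinj G K a b \<in> cspan ((\<lambda>(K, a, b). Tmat G K a b) ` Ccat F k l)"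
proof (induction "card (V K)" arbitrary: K a b rule: less_induct)
  case less
  let ?S = "(\<lambda>(K, a, b). Tmat G K a b) ` Ccat F k l"
  let ?R = "block_retractions K - {restrict id (V K)}"
  have K: "wf_graph K" and a: "set a \<subseteq> V K" and b: "set b \<subseteq> V K"
    using less.prems by (auto simp: Ccat_def)
  have fin: "finite (V K)"
    using K by (simp add: wf_graph_def)
  have "Tmat G K a b j i
      = Tinj G K a b j i + (\<Sum>r\<in>?R. Tinj G (quot_graph r K) (map r a) (map r b) j i)" for j i
  proof -
    have "Tinj G (quot_graph (restrict id (V K)) K) (map (restrict id (V K)) a)
        (map (restrict id (V K)) b) = Tinj G K a b"
      by (simp add: quot_graph_restrict_id[OF K] map_restrict[OF a] map_restrict[OF b])
    then show ?thesis
      using Tmat_eq_sum_Tinj[OF K G a b]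
        sum.remove[OF finite_block_retractions[OF fin] restrict_id_in_block_retractions,
          of "\<lambda>r. Tinj G (quot_graph r K) (map r a) (map r b) j i"]
      by simp
  qed
  then have "Tinj G K a b
      = (\<lambda>j i. Tmat G K a b j i - (\<Sum>r\<in>?R. Tinj G (quot_graph r K) (map r a) (map r b) j i))"
    by (simp add: fun_eq_iff)
  also have "\<dots> \<in> cspan ?S"
  proof (intro cspan_diff cspan_sum)
    show "Tmat G K a b \<in> cspan ?S"
      using less.prems by (intro cspan_base) force
    show "finite ?R"
      using finite_block_retractions[OF fin] by simp
    fix r assume "r \<in> ?R"
    then show "Tinj G (quot_graph r K) (map r a) (map r b) \<in> cspan ?S"
      using less.hyps card_quot_graph_less[OF fin] Ccat_quot_graph[OF assms(1) less.prems]
      by blast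
  qed
  finally show ?case .
qed

section \<open>Intertwiners of the semidirect product\<close>

lemma gclass_eq_iff:
  assumes N: "normal_sub A N"
  shows "gclass N i = gclass N j \<longleftrightarrow> red (rev i @ j) \<in> N"
proof
  assume eq: "gclass N i = gclass N j"
  have "red j \<in> gclass N j"
    using N unfolding normal_sub_def gclass_def by (metis append_Nil2 image_eqI)
  then obtain x where x: "x \<in> N" "red j = red (i @ x)"
    using eq unfolding gclass_def by auto
  moreover have "red x = x"
    using x(1) N by (auto simp: normal_sub_def fwords_def)
  ultimately have "red (rev i @ j) = x"
    by (metis red_append_red_right red_rev_append_cancel)
  then show "red (rev i @ j) \<in> N"
    using x(1) by simp
next
  have sub: "gclass N j \<subseteq> gclass N i" if "red (rev i @ j) \<in> N" for i j
  proof
    fix z assume "z \<in> gclass N j"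
    then obtain y where y: "y \<in> N" "z = red (j @ y)"
      unfolding gclass_def by auto
    then have "red (red (rev i @ j) @ y) \<in> N"
      using that N unfolding normal_sub_def by blast
    moreover have "z = red (i @ red (red (rev i @ j) @ y))"
      using y(2) red_append_rev_cancel[of i "j @ y"] by simp
    ultimately show "z \<in> gclass N i"
      unfolding gclass_def by blast
  qed
  assume "red (rev i @ j) \<in> N"
  moreover have "red (rev j @ i) = rev (red (rev i @ j))"
    by (simp flip: red_rev)
  ultimately show "gclass N i = gclass N j"
    using sub[of i j] sub[of j i] N by (auto simp: normal_sub_def)
qed

lemma finite_idx: "finite (idx n k)"
  using finite_lists_length_eq[of "{1..n}" k] by (simp add: idx_def conj_commute)

lemma map_in_idx_iff:
  assumes "\<sigma> permutes {1..n}"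
  shows "map \<sigma> i \<in> idx n k \<longleftrightarrow> i \<in> idx n k"
  unfolding idx_def mem_Collect_eq length_map set_map image_subset_iff subset_iff
  using permutes_in_image[OF assms] by blast

lemma map_permutes_eq_iff: "\<sigma> permutes S \<Longrightarrow> map \<sigma> q = j \<longleftrightarrow> q = map (inv \<sigma>) j"
  by (auto simp: permutes_inverses map_idI)

lemma sum_mult_ucoef:
  assumes "\<sigma> \<in> H" "\<sigma> permutes {1..n}" "i \<in> idx n k"
  shows "(\<Sum>m\<in>idx n k. T j m * ucoef N H m i \<sigma> c)
       = (if c = gclass N (map \<sigma> i) then T j (map \<sigma> i) else 0)"
proof -
  have "T j m * ucoef N H m i \<sigma> c = (if m = map \<sigma> i then
      (if c = gclass N (map \<sigma> i) then T j (map \<sigma> i) else 0) else 0)" for m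
    using assms(1) by (simp add: ucoef_def)
  then show ?thesis
    using assms(2,3) finite_idx by (simp add: map_in_idx_iff)
qed

lemma sum_ucoef_mult:
  assumes "\<sigma> \<in> H" "\<sigma> permutes {1..n}" "j \<in> idx n l"
  shows "(\<Sum>p\<in>idx n l. ucoef N H j p \<sigma> c * T p i)
       = (if c = gclass N j then T (map (inv \<sigma>) j) i else 0)"
proof -
  have "ucoef N H j p \<sigma> c * T p i = (if p = map (inv \<sigma>) j then
      (if c = gclass N j then T (map (inv \<sigma>) j) i else 0) else 0)" for p
  proof -
    have "j = map \<sigma> p \<longleftrightarrow> p = map (inv \<sigma>) j"
      using map_permutes_eq_iff[OF assms(2), of p j] by (simp add: eq_commute)
    then show ?thesis
      using assms(1) by (simp add: ucoef_def)
  qed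
  moreover have "map (inv \<sigma>) j \<in> idx n l"
    using assms(2,3) permutes_inv map_in_idx_iff by blast
  ultimately show ?thesis
    using finite_idx by simp
qed

lemma if_eq_if_zero_iff:
  "(\<forall>c. (if c = x then A else 0) = (if c = y then B else (0::'a::zero)))
     \<longleftrightarrow> A = B \<and> (A \<noteq> 0 \<longrightarrow> x = y)"
proof
  assume "\<forall>c. (if c = x then A else 0) = (if c = y then B else 0)"
  then have "A = (if x = y then B else 0)" "B = (if x = y then A else 0)"
    by (metis (full_types))+
  then show "A = B \<and> (A \<noteq> 0 \<longrightarrow> x = y)"
    by (metis (full_types))
qed auto

lemma intertw_iff_entrywise:
  assumes H: "\<forall>\<sigma>\<in>H. \<sigma> permutes {1..n}"
  shows "T \<in> intertw N H n k l \<longleftrightarrow>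
    (\<forall>j i. T j i \<noteq> 0 \<longrightarrow> j \<in> idx n l \<and> i \<in> idx n k) \<and>
    (\<forall>\<sigma>\<in>H. \<forall>j\<in>idx n l. \<forall>i\<in>idx n k. T j (map \<sigma> i) = T (map (inv \<sigma>) j) i \<and>
       (T j (map \<sigma> i) \<noteq> 0 \<longrightarrow> gclass N (map \<sigma> i) = gclass N j))"
proof -
  have "(\<lambda>\<sigma> c. \<Sum>m\<in>idx n k. T j m * ucoef N H m i \<sigma> c)
        = (\<lambda>\<sigma> c. \<Sum>p\<in>idx n l. ucoef N H j p \<sigma> c * T p i)
    \<longleftrightarrow> (\<forall>\<sigma>\<in>H. T j (map \<sigma> i) = T (map (inv \<sigma>) j) i \<and>
          (T j (map \<sigma> i) \<noteq> 0 \<longrightarrow> gclass N (map \<sigma> i) = gclass N j))"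
    if "j \<in> idx n l" "i \<in> idx n k" for j i
  proof -
    have "(\<lambda>\<sigma> c. \<Sum>m\<in>idx n k. T j m * ucoef N H m i \<sigma> c)
          = (\<lambda>\<sigma> c. \<Sum>p\<in>idx n l. ucoef N H j p \<sigma> c * T p i)
      \<longleftrightarrow> (\<forall>\<sigma>\<in>H. \<forall>c. (\<Sum>m\<in>idx n k. T j m * ucoef N H m i \<sigma> c)
          = (\<Sum>p\<in>idx n l. ucoef N H j p \<sigma> c * T p i))"
    proof -
      have "(\<Sum>m\<in>idx n k. T j m * ucoef N H m i \<sigma> c) = (\<Sum>p\<in>idx n l. ucoef N H j p \<sigma> c * T p i)"
        if "\<sigma> \<notin> H" for \<sigma> c
        using that by (simp add: ucoef_def)
      then show ?thesis
        unfolding fun_eq_iff by blast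
    qed
    also have "\<dots> \<longleftrightarrow> (\<forall>\<sigma>\<in>H. \<forall>c. (if c = gclass N (map \<sigma> i) then T j (map \<sigma> i) else 0)
          = (if c = gclass N j then T (map (inv \<sigma>) j) i else 0))"
      using H that by (simp add: sum_mult_ucoef sum_ucoef_mult)
    finally show ?thesis
      by (simp only: if_eq_if_zero_iff)
  qed
  then show ?thesis
    unfolding intertw_def by blast
qed

definition invariant_mat :: "nat list set \<Rightarrow> (nat \<Rightarrow> nat) set \<Rightarrow> nat \<Rightarrow> nat \<Rightarrow> nat \<Rightarrow> mat \<Rightarrow> bool" where
  "invariant_mat N H n k l T \<longleftrightarrow>
     (\<forall>j i. T j i \<noteq> 0 \<longrightarrow> j \<in> idx n l \<and> i \<in> idx n k)
   \<and> (\<forall>\<sigma>\<in>H. \<forall>j i. T (map \<sigma> j) (map \<sigma> i) = T j i)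
   \<and> (\<forall>j i. T j i \<noteq> 0 \<longrightarrow> gclass N i = gclass N j)"

lemma intertw_iff_invariant_mat:
  assumes H: "\<forall>\<sigma>\<in>H. \<sigma> permutes {1..n}" and id: "id \<in> H"
  shows "T \<in> intertw N H n k l \<longleftrightarrow> invariant_mat N H n k l T"
proof -
  have inv_map: "map (inv \<sigma>) (map \<sigma> j) = j" "map \<sigma> (map (inv \<sigma>) j) = j" if "\<sigma> \<in> H" for \<sigma> j
  proof -
    have "\<sigma> permutes {1..n}"
      using H that by blast
    then show "map (inv \<sigma>) (map \<sigma> j) = j" "map \<sigma> (map (inv \<sigma>) j) = j"
      by (simp_all add: permutes_inv_o)
  qed
  have idx_map: "map \<sigma> j \<in> idx n l \<longleftrightarrow> j \<in> idx n l" if "\<sigma> \<in> H" for \<sigma> j l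
    using H that map_in_idx_iff by blast
  show ?thesis
    unfolding intertw_iff_entrywise[OF H] invariant_mat_def
  proof (intro iffI conjI; elim conjE)
    assume supp: "\<forall>j i. T j i \<noteq> 0 \<longrightarrow> j \<in> idx n l \<and> i \<in> idx n k"
      and entry: "\<forall>\<sigma>\<in>H. \<forall>j\<in>idx n l. \<forall>i\<in>idx n k. T j (map \<sigma> i) = T (map (inv \<sigma>) j) i \<and>
        (T j (map \<sigma> i) \<noteq> 0 \<longrightarrow> gclass N (map \<sigma> i) = gclass N j)"
    show "\<forall>\<sigma>\<in>H. \<forall>j i. T (map \<sigma> j) (map \<sigma> i) = T j i"
    proof (intro ballI allI)
      fix \<sigma> j i assume \<sigma>: "\<sigma> \<in> H"
      show "T (map \<sigma> j) (map \<sigma> i) = T j i"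
      proof (cases "j \<in> idx n l \<and> i \<in> idx n k")
        case True
        then show ?thesis
          using entry \<sigma> idx_map[OF \<sigma>] inv_map[OF \<sigma>] by metis
      next
        case False
        then show ?thesis
          using supp idx_map[OF \<sigma>] by metis
      qed
    qed
    show "\<forall>j i. T j i \<noteq> 0 \<longrightarrow> gclass N i = gclass N j"
      using supp entry id by (metis inv_id list.map_id)
  next
    assume inv: "\<forall>\<sigma>\<in>H. \<forall>j i. T (map \<sigma> j) (map \<sigma> i) = T j i"
      and cos: "\<forall>j i. T j i \<noteq> 0 \<longrightarrow> gclass N i = gclass N j"
    show "\<forall>\<sigma>\<in>H. \<forall>j\<in>idx n l. \<forall>i\<in>idx n k. T j (map \<sigma> i) = T (map (inv \<sigma>) j) i \<and>
        (T j (map \<sigma> i) \<noteq> 0 \<longrightarrow> gclass N (map \<sigma> i) = gclass N j)"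
      using inv cos inv_map by metis
  qed
qed

section \<open>The matrices of the category are intertwiners\<close>

lemma AutG_permutes: "\<sigma> \<in> AutG G n \<Longrightarrow> \<sigma> permutes {1..n}"
  by (simp add: AutG_def)

lemma AutG_edge_iff: "\<sigma> \<in> AutG G n \<Longrightarrow> (\<sigma> x, \<sigma> y) \<in> E G \<longleftrightarrow> (x, y) \<in> E G"
  by (simp add: AutG_def)

lemma id_in_AutG: "id \<in> AutG G n"
  by (simp add: AutG_def)

lemma inv_in_AutG:
  assumes "\<sigma> \<in> AutG G n"
  shows "inv \<sigma> \<in> AutG G n"
proof -
  have "\<sigma> permutes {1..n}"
    using assms by (rule AutG_permutes)
  then show ?thesis
    using AutG_edge_iff[OF assms, of "inv \<sigma> x" "inv \<sigma> y" for x y]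
    by (simp add: AutG_def permutes_inv permutes_inverses)
qed

lemma hom_comp_AutG:
  assumes \<sigma>: "\<sigma> \<in> AutG G n" and VG: "V G = {1..n}" and K: "wf_graph K" and \<phi>: "\<phi> \<in> homs K G"
  shows "restrict (\<sigma> \<circ> \<phi>) (V K) \<in> homs K G"
  using \<phi> wf_graph_edge[OF K] AutG_edge_iff[OF \<sigma>] permutes_in_image[OF AutG_permutes[OF \<sigma>]] VG
  by (auto simp: homs_def)

lemma card_labelled_homs_AutG_le:
  assumes \<sigma>: "\<sigma> \<in> AutG G n" and VG: "V G = {1..n}" and K: "wf_graph K" and G: "wf_graph G"
    and a: "set a \<subseteq> V K" and b: "set b \<subseteq> V K"
  shows "card (labelled_homs K G a b i j) \<le> card (labelled_homs K G a b (map \<sigma> i) (map \<sigma> j))"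
proof (rule card_inj_on_le[where f = "\<lambda>\<phi>. restrict (\<sigma> \<circ> \<phi>) (V K)"])
  show "finite (labelled_homs K G a b (map \<sigma> i) (map \<sigma> j))"
    using finite_homs K G by (simp add: labelled_homs_def wf_graph_def)
  have "inj \<sigma>"
    using AutG_permutes[OF \<sigma>] by (rule permutes_inj)
  show "inj_on (\<lambda>\<phi>. restrict (\<sigma> \<circ> \<phi>) (V K)) (labelled_homs K G a b i j)"
  proof (rule inj_onI)
    fix \<phi> \<psi> assume "\<phi> \<in> labelled_homs K G a b i j" "\<psi> \<in> labelled_homs K G a b i j"
      and eq: "restrict (\<sigma> \<circ> \<phi>) (V K) = restrict (\<sigma> \<circ> \<psi>) (V K)"
    then have "\<phi> \<in> extensional (V K)" "\<psi> \<in> extensional (V K)"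
      by (auto simp: labelled_homs_def homs_def)
    moreover have "\<phi> x = \<psi> x" if "x \<in> V K" for x
      using fun_cong[OF eq, of x] that \<open>inj \<sigma>\<close> by (simp add: inj_eq)
    ultimately show "\<phi> = \<psi>"
      by (rule extensionalityI)
  qed
  show "(\<lambda>\<phi>. restrict (\<sigma> \<circ> \<phi>) (V K)) ` labelled_homs K G a b i j
      \<subseteq> labelled_homs K G a b (map \<sigma> i) (map \<sigma> j)"
    using hom_comp_AutG[OF \<sigma> VG K] a b by (auto simp: labelled_homs_def map_restrict)
qed

lemma Tmat_AutG_invariant:
  assumes \<sigma>: "\<sigma> \<in> AutG G n" and VG: "V G = {1..n}" and K: "wf_graph K" and G: "wf_graph G"
    and a: "set a \<subseteq> V K" and b: "set b \<subseteq> V K"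
  shows "Tmat G K a b (map \<sigma> j) (map \<sigma> i) = Tmat G K a b j i"
proof -
  have "map (inv \<sigma>) (map \<sigma> x) = x" for x
    using AutG_permutes[OF \<sigma>] by (simp add: permutes_inv_o)
  then show ?thesis
    using card_labelled_homs_AutG_le[OF \<sigma> VG K G a b, of i j]
      card_labelled_homs_AutG_le[OF inv_in_AutG[OF \<sigma>] VG K G a b, of "map \<sigma> i" "map \<sigma> j"]
    by (simp add: Tmat_eq_card)
qed

lemma Ccat_hom_word_in_Fib:
  assumes F: "graph_fibration F" "easy_fibration F" and G: "wf_graph G" "Fib F G \<noteq> {}"
    and C: "(K, a, b) \<in> Ccat F k l" and \<phi>: "\<phi> \<in> homs K G"
  shows "red (rev (map \<phi> a) @ map \<phi> b) \<in> Fib F G"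
proof -
  have "(quot_graph \<phi> K, map \<phi> a, map \<phi> b) \<in> Ccat F k l"
    using Ccat_quot_graph[OF F(2) C] .
  then have Q: "(quot_graph \<phi> K, red (rev (map \<phi> a) @ map \<phi> b)) \<in> F"
    by (simp add: Ccat_def)
  have "(G, []) \<in> F"
    using fibration_normal[OF F(1) G] by (simp add: normal_sub_def Fib_def)
  moreover have "V (quot_graph \<phi> K) \<subseteq> V G" "E (quot_graph \<phi> K) \<subseteq> E G"
    using \<phi> by (auto simp: quot_graph_def homs_def map_edges_def)
  ultimately show ?thesis
    using fibration_supergraph[OF F(1) G(1) _ Q] by (simp add: Fib_def)
qed

lemma invariant_mat_Tmat:
  assumes F: "graph_fibration F" "easy_fibration F" and G: "wf_graph G" "V G = {1..n}"
    and ne: "Fib F G \<noteq> {}" and C: "(K, a, b) \<in> Ccat F k l"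
  shows "invariant_mat (Fib F G) (AutG G n) n k l (Tmat G K a b)"
proof -
  have K: "wf_graph K" and a: "set a \<subseteq> V K" and b: "set b \<subseteq> V K"
    and len: "length a = k" "length b = l"
    using C by (auto simp: Ccat_def)
  have "j \<in> idx n l \<and> i \<in> idx n k \<and> gclass (Fib F G) i = gclass (Fib F G) j"
    if "Tmat G K a b j i \<noteq> 0" for j i
  proof -
    have "labelled_homs K G a b i j \<noteq> {}"
      using that by (auto simp: Tmat_eq_card)
    then obtain \<phi> where \<phi>: "\<phi> \<in> homs K G" "map \<phi> a = i" "map \<phi> b = j"
      by (auto simp: labelled_homs_def)
    then have "set i \<subseteq> V G" "set j \<subseteq> V G"
      using a b unfolding homs_def by (auto simp: subset_iff)
    then have "j \<in> idx n l \<and> i \<in> idx n k"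
      using \<phi>(2,3) len G(2) by (auto simp: idx_def)
    moreover have "gclass (Fib F G) i = gclass (Fib F G) j"
      using Ccat_hom_word_in_Fib[OF F G(1) ne C \<phi>(1)] \<phi>(2,3)
        gclass_eq_iff[OF fibration_normal[OF F(1) G(1) ne]] by simp
    ultimately show ?thesis
      by blast
  qed
  then show ?thesis
    using Tmat_AutG_invariant[OF _ G(2) K G(1) a b] by (simp add: invariant_mat_def)
qed

lemma invariant_mat_lincomb:
  assumes M: "\<And>M. M \<in> X \<Longrightarrow> invariant_mat N H n k l M"
  shows "invariant_mat N H n k l (\<lambda>j i. \<Sum>M\<in>X. c M * M j i)"
proof -
  have nonzero: "\<exists>M\<in>X. M j i \<noteq> 0" if "(\<Sum>M\<in>X. c M * M j i) \<noteq> 0" for j i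
    using sum.not_neutral_contains_not_neutral[OF that] by auto
  have "(\<Sum>M\<in>X. c M * M (map \<sigma> j) (map \<sigma> i)) = (\<Sum>M\<in>X. c M * M j i)" if "\<sigma> \<in> H" for \<sigma> j i
    using M that by (auto simp: invariant_mat_def intro!: sum.cong)
  moreover have "j \<in> idx n l \<and> i \<in> idx n k \<and> gclass N i = gclass N j"
    if "(\<Sum>M\<in>X. c M * M j i) \<noteq> 0" for j i
    using nonzero[OF that] M unfolding invariant_mat_def by blast
  ultimately show ?thesis
    unfolding invariant_mat_def by blast
qed

lemma cspan_Tmat_subset_intertw:
  assumes F: "graph_fibration F" "easy_fibration F" and G: "wf_graph G" "V G = {1..n}"
    and ne: "Fib F G \<noteq> {}"
  shows "cspan ((\<lambda>(K, a, b). Tmat G K a b) ` Ccat F k l) \<subseteq> intertw (Fib F G) (AutG G n) n k l"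
proof
  fix T assume "T \<in> cspan ((\<lambda>(K, a, b). Tmat G K a b) ` Ccat F k l)"
  then obtain X c where X: "X \<subseteq> (\<lambda>(K, a, b). Tmat G K a b) ` Ccat F k l"
    and T: "T = (\<lambda>j i. \<Sum>M\<in>X. c M * M j i)"
    unfolding cspan_def by blast
  have "invariant_mat (Fib F G) (AutG G n) n k l M" if "M \<in> X" for M
    using that X invariant_mat_Tmat[OF F G ne] by fastforce
  then show "T \<in> intertw (Fib F G) (AutG G n) n k l"
    unfolding T using AutG_permutes id_in_AutG
    by (simp add: intertw_iff_invariant_mat invariant_mat_lincomb)
qed

section \<open>Averaging over automorphisms\<close>

lemma inj_endo_hom_extension_in_AutG:
  assumes G: "wf_graph G" "V G = {1..n}" and \<phi>: "\<phi> \<in> homs G G" "inj_on \<phi> (V G)"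
  shows "(\<lambda>x. if x \<in> V G then \<phi> x else x) \<in> AutG G n"
proof -
  define \<sigma> where "\<sigma> x = (if x \<in> V G then \<phi> x else x)" for x
  have fin: "finite (V G)" "finite (E G)"
    using G(1) finite_subset[of "E G" "V G \<times> V G"] by (auto simp: wf_graph_def)
  have "\<sigma> ` V G \<subseteq> V G" "inj_on \<sigma> (V G)"
    using \<phi> by (auto simp: \<sigma>_def homs_def inj_on_def)
  then have "bij_betw \<sigma> (V G) (V G)"
    using endo_inj_surj[OF fin(1)] by (simp add: bij_betw_def)
  then have perm: "\<sigma> permutes V G"
    by (rule bij_imp_permutes) (simp add: \<sigma>_def)
  then have inj: "inj \<sigma>"
    by (rule permutes_inj)
  have fwd: "(\<sigma> x, \<sigma> y) \<in> E G" if "(x, y) \<in> E G" for x y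
    using \<phi>(1) that wf_graph_edge[OF G(1) that] by (simp add: \<sigma>_def homs_def)
  have inj_pair: "inj (map_prod \<sigma> \<sigma>)"
    using prod.inj_map[OF inj inj] .
  have "map_prod \<sigma> \<sigma> ` E G = E G"
    using fwd inj_on_subset[OF inj_pair subset_UNIV] by (intro endo_inj_surj[OF fin(2)]) auto
  then have "(\<sigma> x, \<sigma> y) \<in> E G \<Longrightarrow> (x, y) \<in> E G" for x y
    using inj_image_mem_iff[OF inj_pair, of "(x, y)" "E G"] by simp
  with fwd have "\<forall>x y. (x, y) \<in> E G \<longleftrightarrow> (\<sigma> x, \<sigma> y) \<in> E G"
    by blast
  then show ?thesis
    using perm G(2) unfolding AutG_def \<sigma>_def by simp
qed

lemma inj_on_restrict_AutG:
  assumes "V G = {1..n}"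
  shows "inj_on (\<lambda>\<sigma>. restrict \<sigma> (V G)) (AutG G n)"
proof (rule inj_onI)
  fix \<sigma> \<tau> assume "\<sigma> \<in> AutG G n" "\<tau> \<in> AutG G n" "restrict \<sigma> (V G) = restrict \<tau> (V G)"
  then show "\<sigma> = \<tau>"
    using AutG_permutes permutes_not_in assms by (metis ext restrict_apply')
qed

lemma inj_labelled_homs_self_eq_AutG:
  assumes G: "wf_graph G" "V G = {1..n}" and i0: "set i0 \<subseteq> V G" and j0: "set j0 \<subseteq> V G"
  shows "inj_labelled_homs G G i0 j0 i j
      = (\<lambda>\<sigma>. restrict \<sigma> (V G)) ` {\<sigma> \<in> AutG G n. map \<sigma> i0 = i \<and> map \<sigma> j0 = j}"
proof (intro equalityI subsetI)
  fix \<phi> assume \<phi>: "\<phi> \<in> inj_labelled_homs G G i0 j0 i j"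
  define \<sigma> where "\<sigma> x = (if x \<in> V G then \<phi> x else x)" for x
  have "\<sigma> \<in> AutG G n"
    using inj_endo_hom_extension_in_AutG[OF G] \<phi>
    by (simp add: inj_labelled_homs_def labelled_homs_def \<sigma>_def[abs_def])
  moreover have "restrict \<sigma> (V G) = \<phi>"
    using \<phi> by (auto simp: inj_labelled_homs_def labelled_homs_def homs_def \<sigma>_def extensional_def)
  moreover have "map \<sigma> i0 = i" "map \<sigma> j0 = j"
    using \<phi> i0 j0 by (auto simp: inj_labelled_homs_def labelled_homs_def \<sigma>_def subset_iff)
  ultimately show "\<phi> \<in> (\<lambda>\<sigma>. restrict \<sigma> (V G)) ` {\<sigma> \<in> AutG G n. map \<sigma> i0 = i \<and> map \<sigma> j0 = j}"
    by blast
next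
  fix \<psi> assume "\<psi> \<in> (\<lambda>\<sigma>. restrict \<sigma> (V G)) ` {\<sigma> \<in> AutG G n. map \<sigma> i0 = i \<and> map \<sigma> j0 = j}"
  then obtain \<sigma> where \<sigma>: "\<sigma> \<in> AutG G n" "map \<sigma> i0 = i" "map \<sigma> j0 = j"
    and \<psi>: "\<psi> = restrict \<sigma> (V G)"
    by blast
  have perm: "\<sigma> permutes V G"
    using AutG_permutes[OF \<sigma>(1)] G(2) by simp
  have "restrict \<sigma> (V G) \<in> homs G G"
    using AutG_edge_iff[OF \<sigma>(1)] permutes_in_image[OF perm] wf_graph_edge[OF G(1)]
    unfolding homs_def by simp
  moreover have "inj_on (restrict \<sigma> (V G)) (V G)"
    using inj_on_subset[OF permutes_inj[OF perm] subset_UNIV] by simp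
  ultimately show "\<psi> \<in> inj_labelled_homs G G i0 j0 i j"
    using \<sigma>(2,3) i0 j0 unfolding \<psi> inj_labelled_homs_def labelled_homs_def by (simp add: map_restrict)
qed

lemma Tinj_self_eq_card_AutG:
  assumes G: "wf_graph G" "V G = {1..n}" and i0: "set i0 \<subseteq> V G" and j0: "set j0 \<subseteq> V G"
  shows "Tinj G G i0 j0 j i = of_nat (card {\<sigma> \<in> AutG G n. map \<sigma> i0 = i \<and> map \<sigma> j0 = j})"
  using inj_labelled_homs_self_eq_AutG[OF assms] inj_on_restrict_AutG[OF G(2)]
  unfolding Tinj_def by (simp add: card_image inj_on_subset[of _ "AutG G n"])

lemma finite_AutG: "finite (AutG G n)"
  by (rule finite_subset[OF _ finite_permutations[of "{1..n}"]]) (auto simp: AutG_def)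

lemma invariant_mat_average:
  assumes G: "wf_graph G" "V G = {1..n}" and T: "invariant_mat N (AutG G n) n k l T"
    and X: "X = {p \<in> idx n l \<times> idx n k. T (fst p) (snd p) \<noteq> 0}"
  shows "T j i = (\<Sum>p\<in>X. T (fst p) (snd p) / card (AutG G n) * Tinj G G (snd p) (fst p) j i)"
proof -
  let ?A = "AutG G n"
  let ?q = "\<lambda>\<sigma>. (map (inv \<sigma>) j, map (inv \<sigma>) i)"
  have fin: "finite ?A" "finite X"
    using finite_AutG finite_idx by (simp_all add: X)
  have supp: "T j' i' \<noteq> 0 \<Longrightarrow> (j', i') \<in> idx n l \<times> idx n k" for j' i'
    using T by (simp add: invariant_mat_def)
  have "Tinj G G (snd p) (fst p) j i = (\<Sum>\<sigma>\<in>?A. of_bool (p = ?q \<sigma>))" if "p \<in> X" for p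
  proof -
    have "set (snd p) \<subseteq> V G" "set (fst p) \<subseteq> V G"
      using that G(2) by (auto simp: X idx_def)
    moreover have "map \<sigma> (snd p) = i \<and> map \<sigma> (fst p) = j \<longleftrightarrow> p = ?q \<sigma>" if "\<sigma> \<in> ?A" for \<sigma>
      using map_permutes_eq_iff[OF AutG_permutes[OF that]] by (simp add: prod_eq_iff conj_commute)
    then have "{\<sigma> \<in> ?A. map \<sigma> (snd p) = i \<and> map \<sigma> (fst p) = j} = ?A \<inter> {\<sigma>. p = ?q \<sigma>}"
      by blast
    ultimately show ?thesis
      using fin(1) by (simp add: Tinj_self_eq_card_AutG[OF G])
  qed
  then have "(\<Sum>p\<in>X. T (fst p) (snd p) / card ?A * Tinj G G (snd p) (fst p) j i)
      = (\<Sum>p\<in>X. \<Sum>\<sigma>\<in>?A. if p = ?q \<sigma> then T (fst p) (snd p) / card ?A else 0)"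
    by (simp add: sum_distrib_left of_bool_def if_distrib cong: if_cong)
  also have "\<dots> = (\<Sum>\<sigma>\<in>?A. \<Sum>p\<in>X. if p = ?q \<sigma> then T (fst p) (snd p) / card ?A else 0)"
    by (rule sum.swap)
  also have "\<dots> = (\<Sum>\<sigma>\<in>?A. T (map (inv \<sigma>) j) (map (inv \<sigma>) i) / card ?A)"
    using fin(2) supp by (intro sum.cong refl) (auto simp: X)
  also have "\<dots> = (\<Sum>\<sigma>\<in>?A. T j i / card ?A)"
  proof (rule sum.cong[OF refl])
    fix \<sigma> assume "\<sigma> \<in> ?A"
    then have "inv \<sigma> \<in> ?A"
      by (rule inv_in_AutG)
    then show "T (map (inv \<sigma>) j) (map (inv \<sigma>) i) / card ?A = T j i / card ?A"
      using T by (simp add: invariant_mat_def)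
  qed
  also have "\<dots> = T j i"
    using fin(1) id_in_AutG[of G n] by (cases "card ?A = 0") auto
  finally show ?thesis ..
qed

lemma intertw_subset_cspan_Tmat:
  assumes F: "graph_fibration F" "easy_fibration F" and G: "wf_graph G" "V G = {1..n}"
    and ne: "Fib F G \<noteq> {}"
  shows "intertw (Fib F G) (AutG G n) n k l \<subseteq> cspan ((\<lambda>(K, a, b). Tmat G K a b) ` Ccat F k l)"
proof
  fix T assume "T \<in> intertw (Fib F G) (AutG G n) n k l"
  then have T: "invariant_mat (Fib F G) (AutG G n) n k l T"
    using intertw_iff_invariant_mat[OF _ id_in_AutG] AutG_permutes by blast
  define X where "X = {p \<in> idx n l \<times> idx n k. T (fst p) (snd p) \<noteq> 0}"
  have C: "(G, snd p, fst p) \<in> Ccat F k l" if "p \<in> X" for p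
  proof -
    have "gclass (Fib F G) (snd p) = gclass (Fib F G) (fst p)"
      using T that by (simp add: X_def invariant_mat_def)
    then have "red (rev (snd p) @ fst p) \<in> Fib F G"
      using gclass_eq_iff[OF fibration_normal[OF F(1) G(1) ne]] by blast
    then show ?thesis
      using that G by (auto simp: Ccat_def Fib_def X_def idx_def)
  qed
  have "(\<lambda>j i. \<Sum>p\<in>X. T (fst p) (snd p) / card (AutG G n) * Tinj G G (snd p) (fst p) j i)
      \<in> cspan ((\<lambda>(K, a, b). Tmat G K a b) ` Ccat F k l)"
  proof (intro cspan_sum cspan_scale)
    show "finite X"
      using finite_idx by (simp add: X_def)
    fix p assume "p \<in> X"
    then show "Tinj G G (snd p) (fst p) \<in> cspan ((\<lambda>(K, a, b). Tmat G K a b) ` Ccat F k l)"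
      using Tinj_in_cspan_Tmat[OF F(2) G(1) C] by blast
  qed
  moreover have "T = (\<lambda>j i. \<Sum>p\<in>X. T (fst p) (snd p) / card (AutG G n) * Tinj G G (snd p) (fst p) j i)"
    by (intro ext) (rule invariant_mat_average[OF G T X_def])
  ultimately show "T \<in> cspan ((\<lambda>(K, a, b). Tmat G K a b) ` Ccat F k l)"
    by simp
qed

theorem theorem4p1:
  fixes F :: fibration and G :: graph and n :: nat
  assumes "graph_fibration F" and "easy_fibration F"
    and "wf_graph G" and "V G = {1..n}"
    and "Fib F G \<noteq> {}"
  shows "\<forall>k l. intertw (Fib F G) (AutG G n) n k l
                = cspan ((\<lambda>(K, a, b). Tmat G K a b) ` Ccat F k l)"
  using intertw_subset_cspan_Tmat[OF assms] cspan_Tmat_subset_intertw[OF assms] by blast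

end
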